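(* If the two-player two-action game is symmetric, i.e. its payoff table is: (action 1, action 1) gives $a/a$, (action 1, action 2) gives $b/c$, (action 2, action 1) gives $c/b$, (action 2, action 2) gives $d/d$ (first number the row player's payoff, second the column player's), then the unconstrained SA-IGA self-play dynamics $\dot x=F(x)$ on $x=(p_1,p_2,w_1,w_2)\in\mathbb{R}^4$ is linear, i.e. $F$ is an affine function of $(p_1,p_2,w_1,w_2)$.
   Context: Two players $i\in\{1,2\}$, each with actions $1,2$; $r_i^{jk}$ is the payoff of player $i$ when player $i$ plays action $j$ and its opponent $-i$ plays action $k$ (so for the symmetric game $r_i^{11}=a$, $r_i^{12}=b$, $r_i^{21}=c$, $r_i^{22}=d$ for both $i$). Player $i$'s mixed strategy is given by $p_i\in[0,1]$, its probability of playing action 1. The expected payoff of player $i$ is $V_i(p_1,p_2)=\sum_{j,k}\pi_i(j)\pi_{-i}(k)r_i^{jk}$ with $\pi_i(1)=p_i,\ \pi_i(2)=1-p_i$. The social payoff is $V^{soc}=\frac{1}{2}(V_1+V_2)$. Each player $i$ has a social attitude $w_i\in[0,1]$ and overall payoff $\tilde V_i=(1-w_i)V_i+w_iV^{soc}$. The unconstrained SA-IGA dynamics (both players using SA-IGA) is the system $\dot p_i=\frac{\partial \tilde V_i}{\partial p_i}$ (partial derivative with respect to the player's own $p_i$, all other variables fixed), $\dot w_i=\varepsilon\,(V_i-V^{soc})$, $i\in\{1,2\}$, where $\varepsilon>0$ is a constant. Write this as $\dot x=F(x)$ with $x=(p_1,p_2,w_1,w_2)$. *)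

theory Defs
  imports "HOL-Analysis.Analysis"
begin

text \<open>Payoff table: r i j k is the payoff of player i (i in {1,2}) when it plays
  action j and its opponent plays action k (j, k in {1,2}).
  A mixed strategy p is the probability of playing action 1.\<close>

definition strat :: "real \<Rightarrow> nat \<Rightarrow> real" where
  "strat p j = (if j = 1 then p else 1 - p)"

definition V :: "(nat \<Rightarrow> nat \<Rightarrow> nat \<Rightarrow> real) \<Rightarrow> nat \<Rightarrow> real \<Rightarrow> real \<Rightarrow> real" where
  "V r i p1 p2 =
     (let pown = (if i = 1 then p1 else p2); popp = (if i = 1 then p2 else p1)
      in (\<Sum>j\<in>{1,2}. \<Sum>k\<in>{1,2}. strat pown j * strat popp k * r i j k))"

definition Vsoc :: "(nat \<Rightarrow> nat \<Rightarrow> nat \<Rightarrow> real) \<Rightarrow> real \<Rightarrow> real \<Rightarrow> real" where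
  "Vsoc r p1 p2 = (V r 1 p1 p2 + V r 2 p1 p2) / 2"

definition Vtilde :: "(nat \<Rightarrow> nat \<Rightarrow> nat \<Rightarrow> real) \<Rightarrow> nat \<Rightarrow> real \<Rightarrow> real \<Rightarrow> real \<Rightarrow> real" where
  "Vtilde r i w p1 p2 = (1 - w) * V r i p1 p2 + w * Vsoc r p1 p2"

text \<open>Vector field F of the unconstrained SA-IGA dynamics on x = (p1,p2,w1,w2),
  components x$1 = p1, x$2 = p2, x$3 = w1, x$4 = w2.\<close>
definition saiga_F :: "(nat \<Rightarrow> nat \<Rightarrow> nat \<Rightarrow> real) \<Rightarrow> real \<Rightarrow> real^4 \<Rightarrow> real^4" where
  "saiga_F r \<epsilon> x = (\<chi> n.
     if n = 1 then deriv (\<lambda>q. Vtilde r 1 (x$3) q (x$2)) (x$1)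
     else if n = 2 then deriv (\<lambda>q. Vtilde r 2 (x$4) (x$1) q) (x$2)
     else if n = 3 then \<epsilon> * (V r 1 (x$1) (x$2) - Vsoc r (x$1) (x$2))
     else \<epsilon> * (V r 2 (x$1) (x$2) - Vsoc r (x$1) (x$2)))"

end

theory Submission
  imports Defs
begin

text \<open>In a symmetric game each V_i is bilinear in (p1, p2), so its derivative in the player's
  own strategy is affine in the opponent's; the social attitude w enters Vtilde only through
  the product w (V_soc - V_i), whose p-derivative is constant because V_soc - V_i is affine
  in the own strategy.  Hence the p-components are affine in x.  The w-components are affine
  because V_1 - V_soc = (V_1 - V_2)/2 and the quadratic term p1 p2 cancels in V_1 - V_2.\<close>

definition symmetric_payoffs :: "(nat \<Rightarrow> nat \<Rightarrow> nat \<Rightarrow> real) \<Rightarrow> real \<Rightarrow> real \<Rightarrow> real \<Rightarrow> real \<Rightarrow> bool"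
  where "symmetric_payoffs r a b c d \<longleftrightarrow>
    (\<forall>i\<in>{1, 2}. r i 1 1 = a \<and> r i 1 2 = b \<and> r i 2 1 = c \<and> r i 2 2 = d)"

lemma V_symmetric:
  assumes "symmetric_payoffs r a b c d"
  shows "V r 1 p q = p*q*a + p*(1-q)*b + (1-p)*q*c + (1-p)*(1-q)*d"
    and "V r 2 p q = q*p*a + q*(1-p)*b + (1-q)*p*c + (1-q)*(1-p)*d"
  using assms by (simp_all add: symmetric_payoffs_def V_def strat_def)

lemma Vtilde_1_has_derivative_own:
  assumes "symmetric_payoffs r a b c d"
  shows "((\<lambda>q. Vtilde r 1 w q p2) has_real_derivative
           (a - b - c + d) * p2 + (c - b) / 2 * w + (b - d)) (at p1)"
  unfolding Vtilde_def Vsoc_def V_symmetric[OF assms]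
  by (rule derivative_eq_intros refl | simp)+ (simp add: field_simps)

lemma Vtilde_2_has_derivative_own:
  assumes "symmetric_payoffs r a b c d"
  shows "((\<lambda>q. Vtilde r 2 w p1 q) has_real_derivative
           (a - b - c + d) * p1 + (c - b) / 2 * w + (b - d)) (at p2)"
  unfolding Vtilde_def Vsoc_def V_symmetric[OF assms]
  by (rule derivative_eq_intros refl | simp)+ (simp add: field_simps)

lemma V_minus_Vsoc_symmetric:
  assumes "symmetric_payoffs r a b c d"
  shows "V r 1 p1 p2 - Vsoc r p1 p2 = (b - c) / 2 * (p1 - p2)"
    and "V r 2 p1 p2 - Vsoc r p1 p2 = (b - c) / 2 * (p2 - p1)"
  unfolding Vsoc_def V_symmetric[OF assms] by (simp_all add: field_simps)

lemma saiga_F_symmetric: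
  assumes "symmetric_payoffs r a b c d"
  shows "saiga_F r \<epsilon> x = (\<chi> n.
     if n = 1 then (a - b - c + d) * x$2 + (c - b) / 2 * x$3 + (b - d)
     else if n = 2 then (a - b - c + d) * x$1 + (c - b) / 2 * x$4 + (b - d)
     else if n = 3 then \<epsilon> * ((b - c) / 2 * (x$1 - x$2))
     else \<epsilon> * ((b - c) / 2 * (x$2 - x$1)))"
  unfolding saiga_F_def V_minus_Vsoc_symmetric[OF assms]
    DERIV_imp_deriv[OF Vtilde_1_has_derivative_own[OF assms]]
    DERIV_imp_deriv[OF Vtilde_2_has_derivative_own[OF assms]]
  ..

theorem theorem2:
  fixes r :: "nat \<Rightarrow> nat \<Rightarrow> nat \<Rightarrow> real" and a b c d \<epsilon> :: real
  assumes eps: "\<epsilon> > 0"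
    and sym: "\<And>i. i \<in> {1, 2} \<Longrightarrow>
      r i 1 1 = a \<and> r i 1 2 = b \<and> r i 2 1 = c \<and> r i 2 2 = d"
  shows "\<exists>L (v :: real^4). linear L \<and> (\<forall>x. saiga_F r \<epsilon> x = L x + v)"
proof -
  have sym_payoffs: "symmetric_payoffs r a b c d"
    using sym by (simp add: symmetric_payoffs_def)
  define L where "L = (\<lambda>x::real^4. \<chi> n::4.
     if n = 1 then (a - b - c + d) * x$2 + (c - b) / 2 * x$3
     else if n = 2 then (a - b - c + d) * x$1 + (c - b) / 2 * x$4
     else if n = 3 then \<epsilon> * ((b - c) / 2 * (x$1 - x$2))
     else \<epsilon> * ((b - c) / 2 * (x$2 - x$1)))"
  define v where "v = (\<chi> n::4. if n = 1 \<or> n = 2 then b - d else (0::real))"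
  have "linear L"
    by (rule linearI) (auto simp: L_def vec_eq_iff field_simps)
  moreover have "saiga_F r \<epsilon> x = L x + v" for x
    by (simp add: saiga_F_symmetric[OF sym_payoffs] L_def v_def vec_eq_iff)
  ultimately show ?thesis by blast
qed

end
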